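(* Let $x\mapsto x^{\mu-\nu}\mathbf{L}_\nu(x)/\tilde{t}_{\mu,\nu}(x)$ be considered on $(0,\infty)$. If $-\frac{3}{2}<\nu<\mu$, then this function is strictly increasing on $(0,\infty)$. If either $-3<\mu\leq-\frac{3}{2}$ and $|\nu|<\mu+3$, or $\mu>-\frac{3}{2}$ and $\mu<\nu<\mu+3$, then this function is strictly decreasing on $(0,\infty)$.
   Context: For real $\mu,\nu$ the (normalized) modified Lommel function of the first kind is $$\tilde{t}_{\mu,\nu}(x)=\sum_{k=0}^\infty\frac{(\frac{1}{2}x)^{\mu+2k+1}}{\Gamma\big(k+\frac{\mu-\nu+3}{2}\big)\Gamma\big(k+\frac{\mu+\nu+3}{2}\big)},\quad x>0,$$ and the modified Struve function of the first kind is $$\mathbf{L}_\nu(x)=\sum_{k=0}^\infty\frac{(\frac{1}{2}x)^{2k+\nu+1}}{\Gamma(k+\frac{3}{2})\Gamma(k+\nu+\frac{3}{2})}.$$ *)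

theory Defs
  imports "HOL-Analysis.Analysis"
begin

text \<open>Normalized modified Lommel function of the first kind, with the standard
  convention 1/Gamma = 0 at the poles (reciprocal Gamma function rGamma).\<close>
definition lommel_t :: "real \<Rightarrow> real \<Rightarrow> real \<Rightarrow> real" where
  "lommel_t \<mu> \<nu> x = (\<Sum>k. (x/2) powr (\<mu> + 2 * real k + 1)
      * rGamma (real k + (\<mu> - \<nu> + 3)/2) * rGamma (real k + (\<mu> + \<nu> + 3)/2))"

definition struve_L :: "real \<Rightarrow> real \<Rightarrow> real" where
  "struve_L \<nu> x = (\<Sum>k. (x/2) powr (2 * real k + \<nu> + 1)
      * rGamma (real k + 3/2) * rGamma (real k + \<nu> + 3/2))"

definition ratio_f :: "real \<Rightarrow> real \<Rightarrow> real \<Rightarrow> real" where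
  "ratio_f \<mu> \<nu> x = x powr (\<mu> - \<nu>) * struve_L \<nu> x / lommel_t \<mu> \<nu> x"

end

theory Submission
  imports Defs "HOL-Real_Asymp.Real_Asymp"
begin

text \<open>Since \<open>L \<nu> = t \<nu> \<nu>\<close>, the function is \<open>x powr (\<mu> - \<nu>) * t \<nu> \<nu> x / t \<mu> \<nu> x\<close>.
  Up to the factor \<open>(x/2) powr (\<mu> + 1)\<close>, \<open>t \<mu> \<nu> x\<close> is a power series in \<open>(x/2)\<^sup>2\<close> whose
  coefficients \<open>c\<^sub>k(\<mu>) = 1 / (\<Gamma>(k + (\<mu> - \<nu> + 3)/2) \<Gamma>(k + (\<mu> + \<nu> + 3)/2))\<close> satisfy
  \<open>c\<^sub>k(\<mu>) = ((k + (\<mu> + 3)/2)\<^sup>2 - \<nu>\<^sup>2/4) c\<^sub>k\<^sub>+\<^sub>1(\<mu>)\<close>, so \<open>c\<^sub>k(\<mu>) / c\<^sub>k(\<mu>')\<close> increases strictly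
  in \<open>k\<close> when \<open>\<mu> < \<mu>'\<close>. By the lemma of Biernacki and Krzyz, a quotient of power series with
  positive coefficients increases whenever the quotient of its coefficients does. Hence
  \<open>x powr (\<mu>' - \<mu>) * t \<mu> \<nu> x / t \<mu>' \<nu> x\<close> is strictly increasing on \<open>(0, \<infinity>)\<close> when
  \<open>|\<nu>| < \<mu> + 3\<close> and \<open>\<mu> < \<mu>'\<close>; the first claim is the case \<open>(\<nu>, \<mu>)\<close> and the second is the
  reciprocal of the case \<open>(\<mu>, \<nu>)\<close>.\<close>

lemma summable_power_series_if_recurrence:
  fixes a R :: "nat \<Rightarrow> real"
  assumes rec: "\<And>k. R k * a (Suc k) = a k" and R: "filterlim R at_top sequentially"
  shows "summable (\<lambda>k. a k * y ^ k)"
proof -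
  obtain N where N: "\<And>k. k \<ge> N \<Longrightarrow> R k \<ge> 2 * \<bar>y\<bar> + 1"
    using R unfolding filterlim_at_top eventually_sequentially by blast
  show ?thesis
  proof (rule summable_ratio_test[of "1/2" N])
    fix k assume "k \<ge> N"
    then have Rk: "R k \<ge> 2 * \<bar>y\<bar> + 1" by (rule N)
    have "R k > 0" using Rk by linarith
    then have "\<bar>a (Suc k)\<bar> = \<bar>a k\<bar> / R k"
      by (simp add: rec[of k, symmetric] abs_mult)
    then have "norm (a (Suc k) * y ^ Suc k) = norm (a k * y ^ k) * (\<bar>y\<bar> / R k)"
      by (simp add: abs_mult power_abs)
    also have "\<dots> \<le> norm (a k * y ^ k) * (1/2)"
      using Rk by (intro mult_left_mono) (auto simp: field_simps)
    finally show "norm (a (Suc k) * y ^ Suc k) \<le> 1/2 * norm (a k * y ^ k)"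
      by (simp add: mult.commute)
  qed simp
qed

lemma quotient_cross_term_nonneg:
  fixes a b :: "nat \<Rightarrow> real"
  assumes b: "\<And>k. b k > 0" and mono: "strict_mono (\<lambda>k. a k / b k)"
    and y: "0 < y" "y < z"
  shows "0 \<le> (a i * b j - a j * b i) * (z ^ i * y ^ j - z ^ j * y ^ i)"
proof (induction i j rule: linorder_wlog)
  case (le i j)
  have "a i / b i \<le> a j / b j"
    using monoD[OF strict_mono_mono[OF mono] le] by simp
  then have "a i * b j - a j * b i \<le> 0"
    using b[of i] b[of j] by (simp add: divide_simps)
  moreover have "z ^ i * y ^ j - z ^ j * y ^ i \<le> 0"
  proof -
    have "(z ^ i * y ^ i) * y ^ (j - i) \<le> (z ^ i * y ^ i) * z ^ (j - i)"
      using y by (intro mult_left_mono power_mono) auto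
    moreover have "y ^ j = y ^ i * y ^ (j - i)" "z ^ j = z ^ i * z ^ (j - i)"
      using le by (simp_all flip: power_add)
    ultimately show ?thesis by (simp add: algebra_simps)
  qed
  ultimately show ?case by (rule mult_nonpos_nonpos)
next
  case (sym i j)
  then show ?case by (simp add: algebra_simps)
qed

text \<open>Symmetrising the double sum leaves only nonnegative terms; the two terms \<open>(1, 0)\<close> and
  \<open>(0, 1)\<close> give a positive lower bound independent of \<open>N\<close>, which survives the limit.\<close>

lemma partial_power_sums_cross_ge:
  fixes a b :: "nat \<Rightarrow> real"
  assumes b: "\<And>k. b k > 0" and mono: "strict_mono (\<lambda>k. a k / b k)"
    and y: "0 < y" "y < z" and N: "N \<ge> 2"
  shows "(a 1 * b 0 - a 0 * b 1) * (z - y) \<le>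
     (\<Sum>i<N. a i * z ^ i) * (\<Sum>j<N. b j * y ^ j) - (\<Sum>i<N. a i * y ^ i) * (\<Sum>j<N. b j * z ^ j)"
proof -
  define h where "h i j = (a i * b j - a j * b i) * z ^ i * y ^ j" for i j
  define H where "H i j = (a i * b j - a j * b i) * (z ^ i * y ^ j - z ^ j * y ^ i)" for i j
  have "(\<Sum>i<N. \<Sum>j<N. h i j) = (\<Sum>i<N. \<Sum>j<N. a i * z ^ i * (b j * y ^ j))
          - (\<Sum>i<N. \<Sum>j<N. a j * y ^ j * (b i * z ^ i))"
    by (simp add: h_def sum_subtractf algebra_simps)
  also have "\<dots> = (\<Sum>i<N. a i * z ^ i) * (\<Sum>j<N. b j * y ^ j)
                  - (\<Sum>i<N. a i * y ^ i) * (\<Sum>j<N. b j * z ^ j)"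
    by (subst sum.swap[of _ _ "{..<N}"]) (simp add: sum_product)
  finally have sum_h: "(\<Sum>i<N. \<Sum>j<N. h i j) = \<dots>" .
  have "2 * (\<Sum>i<N. \<Sum>j<N. h i j) = (\<Sum>i<N. \<Sum>j<N. h i j + h j i)"
    by (simp add: sum.distrib sum.swap[of "\<lambda>i j. h j i"])
  also have "\<dots> = (\<Sum>(i, j)\<in>{..<N} \<times> {..<N}. H i j)"
    by (simp add: sum.cartesian_product h_def H_def algebra_simps)
  also have "\<dots> \<ge> (\<Sum>(i, j)\<in>{(1, 0), (0, 1)}. H i j)"
    using N quotient_cross_term_nonneg[OF b mono y]
    by (intro sum_mono2) (auto simp: H_def)
  finally have "2 * (\<Sum>i<N. \<Sum>j<N. h i j) \<ge> H 1 0 + H 0 1" by simp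
  moreover have "H 1 0 + H 0 1 = 2 * ((a 1 * b 0 - a 0 * b 1) * (z - y))"
    by (simp add: H_def algebra_simps)
  ultimately show ?thesis using sum_h by linarith
qed

lemma power_series_cross_less:
  fixes a b :: "nat \<Rightarrow> real"
  assumes b: "\<And>k. b k > 0" and mono: "strict_mono (\<lambda>k. a k / b k)"
    and sa: "\<And>w. w > 0 \<Longrightarrow> summable (\<lambda>k. a k * w ^ k)"
    and sb: "\<And>w. w > 0 \<Longrightarrow> summable (\<lambda>k. b k * w ^ k)"
    and y: "0 < y" "y < z"
  shows "(\<Sum>k. a k * y ^ k) * (\<Sum>k. b k * z ^ k) < (\<Sum>k. a k * z ^ k) * (\<Sum>k. b k * y ^ k)"
proof -
  define \<delta> where "\<delta> = (a 1 * b 0 - a 0 * b 1) * (z - y)"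
  have "a 0 / b 0 < a 1 / b 1" using mono by (simp add: strict_mono_def)
  then have "\<delta> > 0" using b[of 0] b[of 1] y by (simp add: \<delta>_def divide_simps)
  have z: "z > 0" using y by linarith
  have "(\<lambda>N. (\<Sum>i<N. a i * z ^ i) * (\<Sum>j<N. b j * y ^ j) - (\<Sum>i<N. a i * y ^ i) * (\<Sum>j<N. b j * z ^ j))
     \<longlonglongrightarrow> (\<Sum>k. a k * z ^ k) * (\<Sum>k. b k * y ^ k) - (\<Sum>k. a k * y ^ k) * (\<Sum>k. b k * z ^ k)"
    using y z by (intro tendsto_intros summable_LIMSEQ sa sb)
  then have "\<delta> \<le> (\<Sum>k. a k * z ^ k) * (\<Sum>k. b k * y ^ k) - (\<Sum>k. a k * y ^ k) * (\<Sum>k. b k * z ^ k)"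
    by (rule LIMSEQ_le_const) (use partial_power_sums_cross_ge[OF b mono y] in \<open>auto simp: \<delta>_def\<close>)
  with \<open>\<delta> > 0\<close> show ?thesis by linarith
qed

lemma strict_mono_on_power_series_quotient:
  fixes a b :: "nat \<Rightarrow> real"
  assumes b: "\<And>k. b k > 0" and mono: "strict_mono (\<lambda>k. a k / b k)"
    and sa: "\<And>w. w > 0 \<Longrightarrow> summable (\<lambda>k. a k * w ^ k)"
    and sb: "\<And>w. w > 0 \<Longrightarrow> summable (\<lambda>k. b k * w ^ k)"
  shows "strict_mono_on {0<..} (\<lambda>y. (\<Sum>k. a k * y ^ k) / (\<Sum>k. b k * y ^ k))"
proof (rule strict_mono_onI)
  fix y z :: real assume "y \<in> {0<..}" "y < z"
  then have y: "0 < y" "y < z" by auto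
  have "(\<Sum>k. b k * w ^ k) > 0" if "w > 0" for w
    using b that by (intro suminf_pos sb) auto
  with y power_series_cross_less[OF b mono sa sb y]
  show "(\<Sum>k. a k * y ^ k) / (\<Sum>k. b k * y ^ k) < (\<Sum>k. a k * z ^ k) / (\<Sum>k. b k * z ^ k)"
    by (simp add: divide_simps)
qed

definition lommel_coeff :: "real \<Rightarrow> real \<Rightarrow> nat \<Rightarrow> real" where
  "lommel_coeff \<mu> \<nu> k = rGamma (real k + (\<mu> - \<nu> + 3) / 2) * rGamma (real k + (\<mu> + \<nu> + 3) / 2)"

lemma lommel_coeff_pos: "\<bar>\<nu>\<bar> < \<mu> + 3 \<Longrightarrow> lommel_coeff \<mu> \<nu> k > 0"
  by (simp add: lommel_coeff_def rGamma_inverse_Gamma add_nonneg_pos)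

lemma rGamma_of_nat_Suc_plus: "(real k + c) * rGamma (real (Suc k) + c) = rGamma (real k + c)"
  using rGamma_plus1[of "real k + c"] by (simp add: add_ac)

lemma lommel_coeff_Suc:
  "((real k + (\<mu> + 3) / 2)\<^sup>2 - \<nu>\<^sup>2 / 4) * lommel_coeff \<mu> \<nu> (Suc k) = lommel_coeff \<mu> \<nu> k"
proof -
  have "(real k + (\<mu> + 3) / 2)\<^sup>2 - \<nu>\<^sup>2 / 4 = (real k + (\<mu> - \<nu> + 3) / 2) * (real k + (\<mu> + \<nu> + 3) / 2)"
    by (simp add: power2_eq_square field_simps)
  then show ?thesis
    unfolding lommel_coeff_def
    by (simp add: mult_ac flip: rGamma_of_nat_Suc_plus[of k "(\<mu> - \<nu> + 3) / 2"]
        rGamma_of_nat_Suc_plus[of k "(\<mu> + \<nu> + 3) / 2"])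
qed

lemma summable_lommel_coeff: "summable (\<lambda>k. lommel_coeff \<mu> \<nu> k * y ^ k)"
  by (rule summable_power_series_if_recurrence[where R = "\<lambda>k. (real k + (\<mu> + 3) / 2)\<^sup>2 - \<nu>\<^sup>2 / 4"])
    (use lommel_coeff_Suc in auto, real_asymp)

lemma lommel_t_eq_power_series:
  assumes x: "x > 0"
  shows "lommel_t \<mu> \<nu> x = (x / 2) powr (\<mu> + 1) * (\<Sum>k. lommel_coeff \<mu> \<nu> k * ((x / 2)\<^sup>2) ^ k)"
proof -
  have "(x / 2) powr (\<mu> + 2 * real k + 1) * rGamma (real k + (\<mu> - \<nu> + 3) / 2)
          * rGamma (real k + (\<mu> + \<nu> + 3) / 2)
        = (x / 2) powr (\<mu> + 1) * (lommel_coeff \<mu> \<nu> k * ((x / 2)\<^sup>2) ^ k)" for k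
  proof -
    have "(x / 2) powr (2 * real k) = ((x / 2)\<^sup>2) ^ k"
      using x powr_realpow[of "x / 2" "2 * k"] by (simp add: power_mult)
    then show ?thesis by (simp add: lommel_coeff_def powr_add mult_ac)
  qed
  then show ?thesis
    unfolding lommel_t_def by (simp add: suminf_mult summable_lommel_coeff)
qed

lemma lommel_t_pos: "\<bar>\<nu>\<bar> < \<mu> + 3 \<Longrightarrow> x > 0 \<Longrightarrow> lommel_t \<mu> \<nu> x > 0"
  by (simp add: lommel_t_eq_power_series lommel_coeff_pos summable_lommel_coeff suminf_pos)

lemma struve_L_eq_lommel_t: "struve_L \<nu> = lommel_t \<nu> \<nu>"
proof
  fix x
  show "struve_L \<nu> x = lommel_t \<nu> \<nu> x"
    unfolding struve_L_def lommel_t_def by (simp add: algebra_simps add_divide_distrib)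
qed

lemma strict_mono_lommel_coeff_quotient:
  assumes \<nu>: "\<bar>\<nu>\<bar> < \<mu> + 3" and \<mu>: "\<mu> < \<mu>'"
  shows "strict_mono (\<lambda>k. lommel_coeff \<mu> \<nu> k / lommel_coeff \<mu>' \<nu> k)"
proof (rule strict_monoI_Suc)
  fix k
  define R where "R m = (real k + (m + 3) / 2)\<^sup>2 - \<nu>\<^sup>2 / 4" for m
  have "\<bar>\<nu>\<bar> / 2 < real k + (\<mu> + 3) / 2"
    using \<nu> by (simp add: field_simps)
  then have "(\<bar>\<nu>\<bar> / 2)\<^sup>2 < (real k + (\<mu> + 3) / 2)\<^sup>2"
    by (intro power_strict_mono) auto
  then have R_pos: "0 < R \<mu>" by (simp add: R_def power_divide)
  have "(real k + (\<mu> + 3) / 2)\<^sup>2 < (real k + (\<mu>' + 3) / 2)\<^sup>2"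
    using \<nu> \<mu> by (intro power_strict_mono) auto
  then have R_less: "R \<mu> < R \<mu>'" by (simp add: R_def)
  have "lommel_coeff m \<nu> k = R m * lommel_coeff m \<nu> (Suc k)" for m
    by (simp add: R_def lommel_coeff_Suc)
  then have "lommel_coeff \<mu> \<nu> (Suc k) / lommel_coeff \<mu>' \<nu> (Suc k)
        = lommel_coeff \<mu> \<nu> k / lommel_coeff \<mu>' \<nu> k * (R \<mu>' / R \<mu>)"
    using R_pos R_less by simp
  moreover have "lommel_coeff \<mu> \<nu> k / lommel_coeff \<mu>' \<nu> k > 0"
    using \<nu> \<mu> by (simp add: lommel_coeff_pos)
  moreover have "R \<mu>' / R \<mu> > 1" using R_pos R_less by simp
  ultimately show "lommel_coeff \<mu> \<nu> k / lommel_coeff \<mu>' \<nu> k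
                   < lommel_coeff \<mu> \<nu> (Suc k) / lommel_coeff \<mu>' \<nu> (Suc k)"
    by (metis mult.right_neutral mult_strict_left_mono)
qed

lemma strict_mono_on_lommel_t_quotient:
  assumes \<nu>: "\<bar>\<nu>\<bar> < \<mu> + 3" and \<mu>: "\<mu> < \<mu>'"
  shows "strict_mono_on {0<..} (\<lambda>x. x powr (\<mu>' - \<mu>) * lommel_t \<mu> \<nu> x / lommel_t \<mu>' \<nu> x)"
proof -
  define T where "T m y = (\<Sum>k. lommel_coeff m \<nu> k * y ^ k)" for m y
  have T_quotient: "x powr (\<mu>' - \<mu>) * lommel_t \<mu> \<nu> x / lommel_t \<mu>' \<nu> x
      = 2 powr (\<mu>' - \<mu>) * (T \<mu> ((x / 2)\<^sup>2) / T \<mu>' ((x / 2)\<^sup>2))" if x: "x > 0" for x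
  proof -
    have "x powr (\<mu>' - \<mu>) = 2 powr (\<mu>' - \<mu>) * (x / 2) powr (\<mu>' - \<mu>)"
      using x by (simp add: powr_divide)
    moreover have "(x / 2) powr (\<mu>' + 1) = (x / 2) powr (\<mu>' - \<mu>) * (x / 2) powr (\<mu> + 1)"
      by (simp flip: powr_add)
    ultimately show ?thesis
      using x by (simp add: lommel_t_eq_power_series T_def)
  qed
  have "\<bar>\<nu>\<bar> < \<mu>' + 3" using \<nu> \<mu> by linarith
  then have T_mono: "strict_mono_on {0<..} (\<lambda>y. T \<mu> y / T \<mu>' y)"
    unfolding T_def
    by (intro strict_mono_on_power_series_quotient lommel_coeff_pos
        strict_mono_lommel_coeff_quotient[OF \<nu> \<mu>] summable_lommel_coeff)
  show ?thesis
  proof (rule strict_mono_onI)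
    fix x x' :: real assume "x \<in> {0<..}" "x < x'"
    then have x: "0 < x" "x < x'" by auto
    then have "(x / 2)\<^sup>2 \<in> {0<..}" "(x' / 2)\<^sup>2 \<in> {0<..}" "(x / 2)\<^sup>2 < (x' / 2)\<^sup>2"
      by (auto intro: power_strict_mono)
    with T_mono have T_less:
        "T \<mu> ((x / 2)\<^sup>2) / T \<mu>' ((x / 2)\<^sup>2) < T \<mu> ((x' / 2)\<^sup>2) / T \<mu>' ((x' / 2)\<^sup>2)"
      by (rule strict_mono_onD)
    have "x powr (\<mu>' - \<mu>) * lommel_t \<mu> \<nu> x / lommel_t \<mu>' \<nu> x
          = 2 powr (\<mu>' - \<mu>) * (T \<mu> ((x / 2)\<^sup>2) / T \<mu>' ((x / 2)\<^sup>2))"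
      using x by (intro T_quotient) auto
    also have "\<dots> < 2 powr (\<mu>' - \<mu>) * (T \<mu> ((x' / 2)\<^sup>2) / T \<mu>' ((x' / 2)\<^sup>2))"
      using T_less by (intro mult_strict_left_mono) auto
    also have "\<dots> = x' powr (\<mu>' - \<mu>) * lommel_t \<mu> \<nu> x' / lommel_t \<mu>' \<nu> x'"
      using x by (intro T_quotient[symmetric]) auto
    finally show "x powr (\<mu>' - \<mu>) * lommel_t \<mu> \<nu> x / lommel_t \<mu>' \<nu> x
             < x' powr (\<mu>' - \<mu>) * lommel_t \<mu> \<nu> x' / lommel_t \<mu>' \<nu> x'" .
  qed
qed

lemma strict_antimono_on_inverse:
  fixes f :: "'a :: order \<Rightarrow> 'b :: linordered_field"
  assumes "strict_mono_on A f" and "\<And>x. x \<in> A \<Longrightarrow> f x > 0"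
  shows "strict_antimono_on A (\<lambda>x. inverse (f x))"
  using assms by (intro monotone_onI) (simp add: strict_mono_onD)

theorem theorem3p2:
  fixes \<mu> \<nu> :: real
  shows "(-3/2 < \<nu> \<and> \<nu> < \<mu> \<longrightarrow> strict_mono_on {0<..} (ratio_f \<mu> \<nu>))
       \<and> (((-3 < \<mu> \<and> \<mu> \<le> -3/2 \<and> \<bar>\<nu>\<bar> < \<mu> + 3) \<or> (\<mu> > -3/2 \<and> \<mu> < \<nu> \<and> \<nu> < \<mu> + 3))
          \<longrightarrow> strict_antimono_on {0<..} (ratio_f \<mu> \<nu>))"
proof (intro conjI impI)
  assume "-3/2 < \<nu> \<and> \<nu> < \<mu>"
  then have "\<bar>\<nu>\<bar> < \<nu> + 3" "\<nu> < \<mu>" by auto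
  then show "strict_mono_on {0<..} (ratio_f \<mu> \<nu>)"
    unfolding ratio_f_def struve_L_eq_lommel_t by (rule strict_mono_on_lommel_t_quotient)
next
  assume "(-3 < \<mu> \<and> \<mu> \<le> -3/2 \<and> \<bar>\<nu>\<bar> < \<mu> + 3) \<or> (\<mu> > -3/2 \<and> \<mu> < \<nu> \<and> \<nu> < \<mu> + 3)"
  then have \<nu>: "\<bar>\<nu>\<bar> < \<mu> + 3" "\<bar>\<nu>\<bar> < \<nu> + 3" and "\<mu> < \<nu>" by auto
  have "strict_antimono_on {0<..}
      (\<lambda>x. inverse (x powr (\<nu> - \<mu>) * lommel_t \<mu> \<nu> x / lommel_t \<nu> \<nu> x))"
    using \<nu> by (intro strict_antimono_on_inverse strict_mono_on_lommel_t_quotient \<open>\<mu> < \<nu>\<close>)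
      (auto simp: lommel_t_pos)
  moreover have "ratio_f \<mu> \<nu> = (\<lambda>x. inverse (x powr (\<nu> - \<mu>) * lommel_t \<mu> \<nu> x / lommel_t \<nu> \<nu> x))"
    by (simp add: fun_eq_iff ratio_f_def struve_L_eq_lommel_t divide_inverse mult_ac flip: powr_minus)
  ultimately show "strict_antimono_on {0<..} (ratio_f \<mu> \<nu>)" by simp
qed

end
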